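(* Let $G$ be a compactly generated locally compact group, $N$ a closed normal subgroup of $G$, and $\Gamma$ a connected graph of finite degree on which $G$ acts vertex-transitively by automorphisms. (1) If $\Gamma$ is a Cayley-Abels graph for $G$, then $\Gamma/N$ is a Cayley-Abels graph for $G/N$ (with the action induced from that of $G$ on $\Gamma/N$). (2) $\deg(\Gamma/N) \le \deg(\Gamma)$, with equality if and only if $N$ acts freely modulo kernel on $\Gamma$.
   Context: Graphs $\Gamma=(V,E,o,r)$: vertex set $V$, directed edge set $E$, initial-vertex map $o:E\to V$, involutive edge reversal $e\mapsto\bar e$; $\deg(v)=|o^{-1}(v)|$, $\deg(\Gamma)=\sup_v \deg(v)$. For a group $N$ acting on $\Gamma$, the quotient graph $\Gamma/N$ has as vertices the $N$-orbits on $V$ and as edges the $N$-orbits on $E$, with $o(Ne)=No(e)$, $\overline{Ne}=N\bar e$; if $N \trianglelefteq G$ the action of $G$ on $\Gamma/N$ factors through $G/N$. A Cayley-Abels graph for a locally compact group $G$ is a connected graph of finite degree on which $G$ acts vertex-transitively by automorphisms such that vertex stabilizers are open and connected-by-compact (i.e. a stabilizer $U$ satisfies that $U/G^\circ$ is compact; equivalently it is a Cayley-Abels graph for the totally disconnected group $G/G^\circ$ with compact open vertex stabilizers). A group $N$ acting on $\Gamma$ acts freely modulo kernel if for every vertex $v$, the stabilizer $N_{(v)}$ acts trivially on both the vertices and the edges of $\Gamma$. *)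

theory Defs
  imports "HOL-Analysis.Analysis" "HOL-Algebra.Coset" "HOL-Algebra.Generated_Groups"
          "HOL-Library.Extended_Nat"
begin

definition topological_group :: "('g,'m) monoid_scheme \<Rightarrow> 'g topology \<Rightarrow> bool" where
  "topological_group G T \<longleftrightarrow> group G \<and> topspace T = carrier G \<and>
     continuous_map (prod_topology T T) T (\<lambda>(x,y). x \<otimes>\<^bsub>G\<^esub> y) \<and>
     continuous_map T T (\<lambda>x. inv\<^bsub>G\<^esub> x)"

definition locally_compact_group :: "('g,'m) monoid_scheme \<Rightarrow> 'g topology \<Rightarrow> bool" where
  "locally_compact_group G T \<longleftrightarrow> topological_group G T \<and> Hausdorff_space T \<and>
     locally_compact_space T"

definition compactly_generated :: "('g,'m) monoid_scheme \<Rightarrow> 'g topology \<Rightarrow> bool" where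
  "compactly_generated G T \<longleftrightarrow>
     (\<exists>K. K \<subseteq> carrier G \<and> compactin T K \<and> generate G K = carrier G)"

text \<open>Quotient topology on G/N (cosets of N): a set of cosets is open iff its union
  (= its preimage under the projection) is open in G.\<close>
definition quot_top :: "('g,'m) monoid_scheme \<Rightarrow> 'g topology \<Rightarrow> 'g set \<Rightarrow> 'g set topology" where
  "quot_top G T N = topology (\<lambda>U. U \<subseteq> carrier (G Mod N) \<and> openin T (\<Union>U))"

definition identity_component :: "('g,'m) monoid_scheme \<Rightarrow> 'g topology \<Rightarrow> 'g set" where
  "identity_component G T = connected_component_of_set T \<one>\<^bsub>G\<^esub>"

definition connected_by_compact :: "('g,'m) monoid_scheme \<Rightarrow> 'g topology \<Rightarrow> 'g set \<Rightarrow> bool" where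
  "connected_by_compact G T U \<longleftrightarrow>
     (let G0 = identity_component G T in
        G0 \<subseteq> U \<and> compactin (quot_top G T G0) ((\<lambda>g. G0 #>\<^bsub>G\<^esub> g) ` U))"

definition graph :: "'v set \<Rightarrow> 'e set \<Rightarrow> ('e \<Rightarrow> 'v) \<Rightarrow> ('e \<Rightarrow> 'e) \<Rightarrow> bool" where
  "graph V E og rv \<longleftrightarrow> (\<forall>e\<in>E. og e \<in> V \<and> rv e \<in> E \<and> rv (rv e) = e)"

definition vdeg :: "'e set \<Rightarrow> ('e \<Rightarrow> 'v) \<Rightarrow> 'v \<Rightarrow> enat" where
  "vdeg E og v = (if finite {e\<in>E. og e = v} then enat (card {e\<in>E. og e = v}) else \<infinity>)"

definition gdeg :: "'v set \<Rightarrow> 'e set \<Rightarrow> ('e \<Rightarrow> 'v) \<Rightarrow> enat" where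
  "gdeg V E og = (SUP v\<in>V. vdeg E og v)"

definition finite_degree :: "'v set \<Rightarrow> 'e set \<Rightarrow> ('e \<Rightarrow> 'v) \<Rightarrow> bool" where
  "finite_degree V E og \<longleftrightarrow> gdeg V E og < \<infinity>"

definition adjacency :: "'e set \<Rightarrow> ('e \<Rightarrow> 'v) \<Rightarrow> ('e \<Rightarrow> 'e) \<Rightarrow> ('v \<times> 'v) set" where
  "adjacency E og rv = {(og e, og (rv e)) | e. e \<in> E}"

definition connected_graph :: "'v set \<Rightarrow> 'e set \<Rightarrow> ('e \<Rightarrow> 'v) \<Rightarrow> ('e \<Rightarrow> 'e) \<Rightarrow> bool" where
  "connected_graph V E og rv \<longleftrightarrow> graph V E og rv \<and> V \<noteq> {} \<and>
     (\<forall>u\<in>V. \<forall>v\<in>V. (u, v) \<in> (adjacency E og rv)\<^sup>*)"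

definition acts_by_automorphisms ::
  "('g,'m) monoid_scheme \<Rightarrow> 'v set \<Rightarrow> 'e set \<Rightarrow> ('e \<Rightarrow> 'v) \<Rightarrow> ('e \<Rightarrow> 'e)
   \<Rightarrow> ('g \<Rightarrow> 'v \<Rightarrow> 'v) \<Rightarrow> ('g \<Rightarrow> 'e \<Rightarrow> 'e) \<Rightarrow> bool" where
  "acts_by_automorphisms G V E og rv aV aE \<longleftrightarrow>
     (\<forall>g\<in>carrier G. bij_betw (aV g) V V \<and> bij_betw (aE g) E E \<and>
        (\<forall>e\<in>E. og (aE g e) = aV g (og e) \<and> rv (aE g e) = aE g (rv e))) \<and>
     (\<forall>v\<in>V. aV \<one>\<^bsub>G\<^esub> v = v) \<and> (\<forall>e\<in>E. aE \<one>\<^bsub>G\<^esub> e = e) \<and>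
     (\<forall>g\<in>carrier G. \<forall>h\<in>carrier G.
        (\<forall>v\<in>V. aV (g \<otimes>\<^bsub>G\<^esub> h) v = aV g (aV h v)) \<and>
        (\<forall>e\<in>E. aE (g \<otimes>\<^bsub>G\<^esub> h) e = aE g (aE h e)))"

definition vertex_transitive ::
  "('g,'m) monoid_scheme \<Rightarrow> 'v set \<Rightarrow> ('g \<Rightarrow> 'v \<Rightarrow> 'v) \<Rightarrow> bool" where
  "vertex_transitive G V aV \<longleftrightarrow> (\<forall>u\<in>V. \<forall>v\<in>V. \<exists>g\<in>carrier G. aV g u = v)"

definition stabilizer :: "('g,'m) monoid_scheme \<Rightarrow> ('g \<Rightarrow> 'v \<Rightarrow> 'v) \<Rightarrow> 'v \<Rightarrow> 'g set" where
  "stabilizer G aV v = {g\<in>carrier G. aV g v = v}"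

definition cayley_abels_graph ::
  "('g,'m) monoid_scheme \<Rightarrow> 'g topology \<Rightarrow> 'v set \<Rightarrow> 'e set \<Rightarrow> ('e \<Rightarrow> 'v) \<Rightarrow> ('e \<Rightarrow> 'e)
   \<Rightarrow> ('g \<Rightarrow> 'v \<Rightarrow> 'v) \<Rightarrow> ('g \<Rightarrow> 'e \<Rightarrow> 'e) \<Rightarrow> bool" where
  "cayley_abels_graph G T V E og rv aV aE \<longleftrightarrow>
     connected_graph V E og rv \<and> finite_degree V E og \<and>
     acts_by_automorphisms G V E og rv aV aE \<and> vertex_transitive G V aV \<and>
     (\<forall>v\<in>V. openin T (stabilizer G aV v) \<and> connected_by_compact G T (stabilizer G aV v))"

definition orbit :: "'g set \<Rightarrow> ('g \<Rightarrow> 'x \<Rightarrow> 'x) \<Rightarrow> 'x \<Rightarrow> 'x set" where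
  "orbit N a x = {a n x | n. n \<in> N}"

definition qV :: "'g set \<Rightarrow> 'v set \<Rightarrow> ('g \<Rightarrow> 'v \<Rightarrow> 'v) \<Rightarrow> 'v set set" where
  "qV N V aV = orbit N aV ` V"

definition qE :: "'g set \<Rightarrow> 'e set \<Rightarrow> ('g \<Rightarrow> 'e \<Rightarrow> 'e) \<Rightarrow> 'e set set" where
  "qE N E aE = orbit N aE ` E"

text \<open>o(Ne) = N o(e): for an orbit X = Ne this set equals N o(e).\<close>
definition qo :: "'g set \<Rightarrow> ('g \<Rightarrow> 'v \<Rightarrow> 'v) \<Rightarrow> ('e \<Rightarrow> 'v) \<Rightarrow> 'e set \<Rightarrow> 'v set" where
  "qo N aV og X = {aV n (og e) | n e. n \<in> N \<and> e \<in> X}"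

text \<open>reversal of Ne is N(reversed e), i.e. the image of the orbit under reversal.\<close>
definition qrv :: "('e \<Rightarrow> 'e) \<Rightarrow> 'e set \<Rightarrow> 'e set" where
  "qrv rv X = rv ` X"

definition qact :: "('g \<Rightarrow> 'x \<Rightarrow> 'x) \<Rightarrow> 'g set \<Rightarrow> 'x set \<Rightarrow> 'x set" where
  "qact a C X = {a g x | g x. g \<in> C \<and> x \<in> X}"

definition acts_freely_mod_kernel ::
  "'g set \<Rightarrow> 'v set \<Rightarrow> 'e set \<Rightarrow> ('g \<Rightarrow> 'v \<Rightarrow> 'v) \<Rightarrow> ('g \<Rightarrow> 'e \<Rightarrow> 'e) \<Rightarrow> bool" where
  "acts_freely_mod_kernel N V E aV aE \<longleftrightarrow>
     (\<forall>v\<in>V. \<forall>n\<in>N. aV n v = v \<longrightarrow> (\<forall>w\<in>V. aV n w = w) \<and> (\<forall>e\<in>E. aE n e = e))"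

end

theory Submission
  imports Defs
begin

text \<open>The \<open>N\<close>-orbits of vertices and edges form a graph on which \<open>G/N\<close> acts by
  \<open>(Ng)(Nx) = N(gx)\<close>. The edges at \<open>Nv\<close> are the \<open>N\<close>-orbits of the edges at \<open>v\<close>, and two edges
  at \<open>v\<close> lie in one \<open>N\<close>-orbit iff they are related by the stabilizer \<open>N\<^sub>v\<close>. So the degree of
  \<open>Nv\<close> is at most that of \<open>v\<close>, with equality iff \<open>N\<^sub>v\<close> fixes every edge at \<open>v\<close>; by
  connectedness this holds at all vertices iff \<open>N\<close> acts freely modulo kernel, and by vertex
  transitivity both degrees are attained at every vertex.

  The stabilizer of \<open>Nv\<close> in \<open>G/N\<close> is the image of \<open>G\<^sub>v\<close>. Its preimage in \<open>G\<close> is a union of left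
  cosets of the open subgroup \<open>G\<^sub>v\<close>, as is the preimage of its complement, so it is open and
  closed in \<open>G/N\<close> and therefore contains the identity component \<open>(G/N)\<degree>\<close>. Finally the continuous
  map \<open>G/G\<degree> \<rightarrow> (G/N)/(G/N)\<degree>\<close> carries the compact set \<open>G\<^sub>vG\<degree>/G\<degree>\<close> onto the image of the
  stabilizer of \<open>Nv\<close>.\<close>

section \<open>The quotient topology on right cosets\<close>

lemma istopology_quot_top:
  assumes "group G" "subgroup H G"
  shows "istopology (\<lambda>U. U \<subseteq> carrier (G Mod H) \<and> openin T (\<Union>U))"
  unfolding istopology_def
proof (rule conjI; intro allI impI)
  fix S U assume S: "S \<subseteq> carrier (G Mod H) \<and> openin T (\<Union>S)"
    and U: "U \<subseteq> carrier (G Mod H) \<and> openin T (\<Union>U)"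
  have disjoint: "pairwise disjnt (rcosets\<^bsub>G\<^esub> H)" using group.rcos_disjoint[OF assms] .
  have "\<Union>S \<inter> \<Union>U \<subseteq> \<Union>(S \<inter> U)"
  proof
    fix x assume "x \<in> \<Union>S \<inter> \<Union>U"
    then obtain A B where AB: "A \<in> S" "B \<in> U" "x \<in> A" "x \<in> B" by blast
    then have "A \<in> rcosets\<^bsub>G\<^esub> H" "B \<in> rcosets\<^bsub>G\<^esub> H" using S U by (auto simp: FactGroup_def)
    with disjoint AB have "A = B" unfolding pairwise_def disjnt_def by blast
    with AB show "x \<in> \<Union>(S \<inter> U)" by blast
  qed
  then have "\<Union>(S \<inter> U) = \<Union>S \<inter> \<Union>U" by blast
  then show "S \<inter> U \<subseteq> carrier (G Mod H) \<and> openin T (\<Union>(S \<inter> U))" using S U by auto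
next
  fix K assume K: "\<forall>k\<in>K. k \<subseteq> carrier (G Mod H) \<and> openin T (\<Union>k)"
  have "\<Union>(\<Union>K) = \<Union>(Union ` K)" by blast
  moreover have "openin T (\<Union>(Union ` K))" using K by (intro openin_Union) auto
  ultimately show "\<Union>K \<subseteq> carrier (G Mod H) \<and> openin T (\<Union>(\<Union>K))" using K by auto
qed

lemma openin_quot_top:
  assumes "group G" "subgroup H G"
  shows "openin (quot_top G T H) U \<longleftrightarrow> U \<subseteq> rcosets\<^bsub>G\<^esub> H \<and> openin T (\<Union>U)"
  unfolding quot_top_def using istopology_quot_top[OF assms, of T] by (simp add: FactGroup_def)

lemma topspace_quot_top:
  assumes "group G" "subgroup H G" "topspace T = carrier G"
  shows "topspace (quot_top G T H) = rcosets\<^bsub>G\<^esub> H"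
proof -
  have "openin (quot_top G T H) (rcosets\<^bsub>G\<^esub> H)"
    using openin_quot_top[OF assms(1,2)] group.rcosets_part_G[OF assms(1,2)] assms(3)
    by (metis openin_topspace order_refl)
  moreover have "\<And>U. openin (quot_top G T H) U \<Longrightarrow> U \<subseteq> rcosets\<^bsub>G\<^esub> H"
    using openin_quot_top[OF assms(1,2)] by blast
  ultimately show ?thesis unfolding topspace_def by blast
qed

lemma Union_rcosets_Collect:
  assumes "group G" "subgroup H G"
  shows "\<Union>{C \<in> rcosets\<^bsub>G\<^esub> H. P C} = {x \<in> carrier G. P (H #>\<^bsub>G\<^esub> x)}"
proof
  show "\<Union>{C \<in> rcosets\<^bsub>G\<^esub> H. P C} \<subseteq> {x \<in> carrier G. P (H #>\<^bsub>G\<^esub> x)}"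
  proof
    fix x assume "x \<in> \<Union>{C \<in> rcosets\<^bsub>G\<^esub> H. P C}"
    then obtain g where g: "g \<in> carrier G" "x \<in> H #>\<^bsub>G\<^esub> g" "P (H #>\<^bsub>G\<^esub> g)"
      unfolding RCOSETS_def by blast
    have "H #>\<^bsub>G\<^esub> g = H #>\<^bsub>G\<^esub> x" using group.repr_independence[OF assms(1) g(2,1) assms(2)] .
    moreover have "x \<in> carrier G" using g subgroup.elemrcos_carrier[OF assms(2,1)] by blast
    ultimately show "x \<in> {x \<in> carrier G. P (H #>\<^bsub>G\<^esub> x)}" using g by auto
  qed
  show "{x \<in> carrier G. P (H #>\<^bsub>G\<^esub> x)} \<subseteq> \<Union>{C \<in> rcosets\<^bsub>G\<^esub> H. P C}"
    using group.rcos_self[OF assms(1) _ assms(2)] group.rcosetsI[OF assms(1) subgroup.subset[OF assms(2)]]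
    by blast
qed

lemma continuous_map_quot_top_proj:
  assumes "group G" "subgroup H G" "topspace T = carrier G"
  shows "continuous_map T (quot_top G T H) (\<lambda>g. H #>\<^bsub>G\<^esub> g)"
  unfolding continuous_map_def
proof (intro conjI allI impI)
  show "(\<lambda>g. H #>\<^bsub>G\<^esub> g) \<in> topspace T \<rightarrow> topspace (quot_top G T H)"
    using topspace_quot_top[OF assms] assms(3) group.rcosetsI[OF assms(1) subgroup.subset[OF assms(2)]]
    by auto
  fix U assume "openin (quot_top G T H) U"
  then have U: "U \<subseteq> rcosets\<^bsub>G\<^esub> H" "openin T (\<Union>U)" using openin_quot_top[OF assms(1,2)] by auto
  have "\<Union>U = \<Union>{C \<in> rcosets\<^bsub>G\<^esub> H. C \<in> U}" using U by blast
  also have "\<dots> = {x \<in> topspace T. H #>\<^bsub>G\<^esub> x \<in> U}"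
    using Union_rcosets_Collect[OF assms(1,2)] assms(3) by simp
  finally show "openin T {x \<in> topspace T. H #>\<^bsub>G\<^esub> x \<in> U}" using U by simp
qed

text \<open>No well-definedness hypothesis is needed: the existence of \<open>f\<close> forces \<open>h\<close> to be constant
  on cosets.\<close>

lemma continuous_map_quot_top_factor:
  assumes "group G" "subgroup H G" "topspace T = carrier G"
    and h: "continuous_map T S h"
    and f: "\<And>g. g \<in> carrier G \<Longrightarrow> f (H #>\<^bsub>G\<^esub> g) = h g"
  shows "continuous_map (quot_top G T H) S f"
  unfolding continuous_map_def
proof (intro conjI allI impI)
  show "f \<in> topspace (quot_top G T H) \<rightarrow> topspace S"
    using topspace_quot_top[OF assms(1-3)] f continuous_map_funspace[OF h] assms(3)
    unfolding RCOSETS_def by fastforce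
  fix U assume U: "openin S U"
  have "\<Union>{C \<in> rcosets\<^bsub>G\<^esub> H. f C \<in> U} = {x \<in> topspace T. h x \<in> U}"
    using Union_rcosets_Collect[OF assms(1,2), of "\<lambda>C. f C \<in> U"] f assms(3) by auto
  moreover have "openin T {x \<in> topspace T. h x \<in> U}" using h U openin_continuous_map_preimage by blast
  ultimately show "openin (quot_top G T H) {C \<in> topspace (quot_top G T H). f C \<in> U}"
    using openin_quot_top[OF assms(1,2)] topspace_quot_top[OF assms(1-3)] by auto
qed

section \<open>Topological groups\<close>

lemma continuous_map_left_mult:
  assumes "topological_group G T" "a \<in> carrier G"
  shows "continuous_map T T (\<lambda>x. a \<otimes>\<^bsub>G\<^esub> x)"
proof -
  have mult: "continuous_map (prod_topology T T) T (\<lambda>(x,y). x \<otimes>\<^bsub>G\<^esub> y)"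
    and space: "topspace T = carrier G"
    using assms(1) unfolding topological_group_def by auto
  have "continuous_map T (prod_topology T T) (\<lambda>x. (a, x))"
    by (intro continuous_map_pairedI continuous_map_const[THEN iffD2] continuous_map_id)
      (use space assms(2) in auto)
  from continuous_map_compose[OF this mult] show ?thesis by (simp add: o_def)
qed

lemma openin_l_coset:
  assumes "topological_group G T" "a \<in> carrier G" "openin T S"
  shows "openin T (a <#\<^bsub>G\<^esub> S)"
proof -
  have "group G" and space: "topspace T = carrier G" using assms(1) unfolding topological_group_def by auto
  interpret group G by fact
  have S: "S \<subseteq> carrier G" using openin_subset[OF assms(3)] space by simp
  have "a <#\<^bsub>G\<^esub> S = {x \<in> topspace T. inv\<^bsub>G\<^esub> a \<otimes>\<^bsub>G\<^esub> x \<in> S}"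
  proof
    show "a <#\<^bsub>G\<^esub> S \<subseteq> {x \<in> topspace T. inv\<^bsub>G\<^esub> a \<otimes>\<^bsub>G\<^esub> x \<in> S}"
      using S assms(2) space by (auto simp: l_coset_def m_assoc[symmetric])
    show "{x \<in> topspace T. inv\<^bsub>G\<^esub> a \<otimes>\<^bsub>G\<^esub> x \<in> S} \<subseteq> a <#\<^bsub>G\<^esub> S"
    proof
      fix x assume x: "x \<in> {x \<in> topspace T. inv\<^bsub>G\<^esub> a \<otimes>\<^bsub>G\<^esub> x \<in> S}"
      then have "x = a \<otimes>\<^bsub>G\<^esub> (inv\<^bsub>G\<^esub> a \<otimes>\<^bsub>G\<^esub> x)" using space assms(2) by (simp add: m_assoc[symmetric])
      then show "x \<in> a <#\<^bsub>G\<^esub> S" using x unfolding l_coset_def by blast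
    qed
  qed
  moreover have "openin T {x \<in> topspace T. inv\<^bsub>G\<^esub> a \<otimes>\<^bsub>G\<^esub> x \<in> S}"
    using openin_continuous_map_preimage[OF continuous_map_left_mult[OF assms(1)] assms(3)] assms(2)
    by simp
  ultimately show ?thesis by simp
qed

text \<open>\<open>S\<close> is the union of the open sets \<open>xU\<close>, \<open>x \<in> S\<close>.\<close>

lemma openin_if_right_mult_stable:
  assumes "topological_group G T" "openin T U" "\<one>\<^bsub>G\<^esub> \<in> U"
    and "S \<subseteq> carrier G" "\<And>x u. x \<in> S \<Longrightarrow> u \<in> U \<Longrightarrow> x \<otimes>\<^bsub>G\<^esub> u \<in> S"
  shows "openin T S"
proof -
  have "group G" using assms(1) unfolding topological_group_def by auto
  interpret group G by fact
  have "S = \<Union>((\<lambda>x. x <#\<^bsub>G\<^esub> U) ` S)"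
  proof
    show "S \<subseteq> \<Union>((\<lambda>x. x <#\<^bsub>G\<^esub> U) ` S)"
    proof
      fix x assume "x \<in> S"
      then have "x \<in> x <#\<^bsub>G\<^esub> U"
        using assms(3,4) unfolding l_coset_def by (force intro: bexI[of _ "\<one>\<^bsub>G\<^esub>"])
      then show "x \<in> \<Union>((\<lambda>x. x <#\<^bsub>G\<^esub> U) ` S)" using \<open>x \<in> S\<close> by blast
    qed
    show "\<Union>((\<lambda>x. x <#\<^bsub>G\<^esub> U) ` S) \<subseteq> S" using assms(5) unfolding l_coset_def by blast
  qed
  moreover have "openin T (\<Union>((\<lambda>x. x <#\<^bsub>G\<^esub> U) ` S))"
    using openin_l_coset[OF assms(1) _ assms(2)] assms(4) by (intro openin_Union) blast
  ultimately show ?thesis by simp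
qed

text \<open>Only continuity of left translations and of inversion is assumed: that is all that is
  established below for \<open>G/N\<close> with the quotient topology.\<close>

lemma subgroup_connected_component_of_one:
  assumes "group Q" "topspace \<tau> = carrier Q"
    and left: "\<And>c. c \<in> carrier Q \<Longrightarrow> continuous_map \<tau> \<tau> (\<lambda>x. c \<otimes>\<^bsub>Q\<^esub> x)"
    and inv: "continuous_map \<tau> \<tau> (\<lambda>x. inv\<^bsub>Q\<^esub> x)"
  shows "subgroup (connected_component_of_set \<tau> \<one>\<^bsub>Q\<^esub>) Q"
proof -
  interpret group Q by fact
  let ?K = "connected_component_of_set \<tau> \<one>\<^bsub>Q\<^esub>"
  have K: "?K \<subseteq> carrier Q" using connected_component_of_subset_topspace assms(2) by metis
  have connected: "connectedin \<tau> ?K" by (rule connectedin_connected_component_of)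
  have one: "\<one>\<^bsub>Q\<^esub> \<in> ?K" using connected_component_of_refl assms(2) by fastforce
  show ?thesis
  proof
    show "?K \<subseteq> carrier Q" by fact
    show "\<one>\<^bsub>Q\<^esub> \<in> ?K" by fact
  next
    fix c d assume c: "c \<in> ?K" and d: "d \<in> ?K"
    have cQ: "c \<in> carrier Q" using c K by blast
    have "connectedin \<tau> ((\<lambda>x. c \<otimes>\<^bsub>Q\<^esub> x) ` ?K)"
      using connectedin_continuous_map_image[OF left[OF cQ] connected] .
    moreover have "c \<in> (\<lambda>x. c \<otimes>\<^bsub>Q\<^esub> x) ` ?K" using one cQ by force
    ultimately have "(\<lambda>x. c \<otimes>\<^bsub>Q\<^esub> x) ` ?K \<subseteq> connected_component_of_set \<tau> c"
      by (rule connected_component_of_maximal)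
    moreover have "connected_component_of_set \<tau> c = ?K"
      using c connected_component_of_equiv by (metis mem_Collect_eq)
    ultimately show "c \<otimes>\<^bsub>Q\<^esub> d \<in> ?K" using d by blast
  next
    fix c assume c: "c \<in> ?K"
    have "connectedin \<tau> ((\<lambda>x. inv\<^bsub>Q\<^esub> x) ` ?K)"
      using connectedin_continuous_map_image[OF inv connected] .
    moreover have "\<one>\<^bsub>Q\<^esub> \<in> (\<lambda>x. inv\<^bsub>Q\<^esub> x) ` ?K" using one by force
    ultimately have "(\<lambda>x. inv\<^bsub>Q\<^esub> x) ` ?K \<subseteq> ?K"
      by (rule connected_component_of_maximal)
    then show "inv\<^bsub>Q\<^esub> c \<in> ?K" using c by blast
  qed
qed

section \<open>Degrees of graphs with a vertex-transitive group of automorphisms\<close>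

definition out_edges :: "'e set \<Rightarrow> ('e \<Rightarrow> 'v) \<Rightarrow> 'v \<Rightarrow> 'e set" where
  "out_edges E og v = {e \<in> E. og e = v}"

lemma vdeg_out_edges:
  "vdeg E og v = (if finite (out_edges E og v) then enat (card (out_edges E og v)) else \<infinity>)"
  by (simp add: vdeg_def out_edges_def)

lemma vdeg_le_gdeg: "v \<in> V \<Longrightarrow> vdeg E og v \<le> gdeg V E og"
  unfolding gdeg_def by (rule SUP_upper)

lemma finite_out_edges:
  assumes "finite_degree V E og" "v \<in> V"
  shows "finite (out_edges E og v)"
proof -
  have "vdeg E og v < \<infinity>"
    using vdeg_le_gdeg[OF assms(2)] assms(1) unfolding finite_degree_def by (rule order_le_less_trans)
  then show ?thesis unfolding vdeg_out_edges by (auto split: if_splits)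
qed

lemma out_edges_automorphism:
  assumes "graph V E og rv" "bij_betw f V V" "bij_betw h E E"
    and og: "\<And>e. e \<in> E \<Longrightarrow> og (h e) = f (og e)" and "v \<in> V"
  shows "out_edges E og (f v) = h ` out_edges E og v"
proof
  show "h ` out_edges E og v \<subseteq> out_edges E og (f v)"
    using og bij_betwE[OF assms(3)] unfolding out_edges_def by auto
  show "out_edges E og (f v) \<subseteq> h ` out_edges E og v"
  proof
    fix e assume e: "e \<in> out_edges E og (f v)"
    then obtain e' where e': "e' \<in> E" "e = h e'"
      using bij_betw_imp_surj_on[OF assms(3)] unfolding out_edges_def by blast
    have "f (og e') = f v" using e e' og unfolding out_edges_def by simp
    moreover have "og e' \<in> V" using assms(1) e'(1) unfolding graph_def by blast
    ultimately have "og e' = v"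
      using bij_betw_imp_inj_on[OF assms(2)] assms(5) unfolding inj_on_def by blast
    then show "e \<in> h ` out_edges E og v" using e' unfolding out_edges_def by blast
  qed
qed

lemma vdeg_automorphism:
  assumes "graph V E og rv" "bij_betw f V V" "bij_betw h E E"
    and "\<And>e. e \<in> E \<Longrightarrow> og (h e) = f (og e)" and "v \<in> V"
  shows "vdeg E og (f v) = vdeg E og v"
proof -
  have "inj_on h (out_edges E og v)"
    using bij_betw_imp_inj_on[OF assms(3)] by (rule inj_on_subset) (auto simp: out_edges_def)
  then show ?thesis
    by (simp add: vdeg_out_edges out_edges_automorphism[OF assms] card_image finite_image_iff)
qed

lemma gdeg_eq_vdeg_if_vertex_transitive:
  assumes "graph V E og rv" "acts_by_automorphisms G V E og rv aV aE"
    and "vertex_transitive G V aV" "v \<in> V"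
  shows "gdeg V E og = vdeg E og v"
proof -
  have "vdeg E og u = vdeg E og v" if "u \<in> V" for u
  proof -
    obtain g where "g \<in> carrier G" "aV g v = u"
      using assms(3,4) \<open>u \<in> V\<close> unfolding vertex_transitive_def by blast
    then show ?thesis
      using vdeg_automorphism[OF assms(1) _ _ _ assms(4), of "aV g" "aE g"] assms(2)
      unfolding acts_by_automorphisms_def by blast
  qed
  then show ?thesis unfolding gdeg_def using assms(4) by (metis SUP_cong SUP_constant empty_iff)
qed

section \<open>Orbits of a normal subgroup and the induced action of the quotient group\<close>

locale normal_subgroup_action = normal N G for N and G :: "('g,'m) monoid_scheme" (structure) +
  fixes X :: "'x set" and a :: "'g \<Rightarrow> 'x \<Rightarrow> 'x"
  assumes act_closed: "g \<in> carrier G \<Longrightarrow> x \<in> X \<Longrightarrow> a g x \<in> X"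
    and act_one: "x \<in> X \<Longrightarrow> a \<one> x = x"
    and act_mult: "g \<in> carrier G \<Longrightarrow> h \<in> carrier G \<Longrightarrow> x \<in> X \<Longrightarrow> a (g \<otimes> h) x = a g (a h x)"
begin

lemma act_inv_act: "g \<in> carrier G \<Longrightarrow> x \<in> X \<Longrightarrow> a (inv g) (a g x) = x"
  by (metis act_mult act_one inv_closed l_inv)

lemma act_act_inv: "g \<in> carrier G \<Longrightarrow> x \<in> X \<Longrightarrow> a g (a (inv g) x) = x"
  by (metis act_mult act_one inv_closed r_inv)

lemma orbit_subset: "x \<in> X \<Longrightarrow> orbit N a x \<subseteq> X"
  unfolding orbit_def using act_closed mem_carrier by blast

lemma orbitI: "n \<in> N \<Longrightarrow> a n x \<in> orbit N a x"
  unfolding orbit_def by blast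

lemma orbit_self: "x \<in> X \<Longrightarrow> x \<in> orbit N a x"
  using orbitI[of \<one> x] act_one by simp

lemma orbit_eq_if_mem:
  assumes "x \<in> X" "y \<in> orbit N a x"
  shows "orbit N a y = orbit N a x"
proof -
  obtain m where m: "m \<in> N" "y = a m x" using assms unfolding orbit_def by blast
  show ?thesis
  proof
    show "orbit N a y \<subseteq> orbit N a x"
    proof
      fix z assume "z \<in> orbit N a y"
      then obtain n where n: "n \<in> N" "z = a n y" unfolding orbit_def by blast
      then have "z = a (n \<otimes> m) x" using m assms act_mult mem_carrier by auto
      then show "z \<in> orbit N a x" using n m orbitI by simp
    qed
    show "orbit N a x \<subseteq> orbit N a y"
    proof
      fix z assume "z \<in> orbit N a x"
      then obtain n where n: "n \<in> N" "z = a n x" unfolding orbit_def by blast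
      have "a (n \<otimes> inv m) y = a n x" using m n assms mem_carrier
        by (simp add: act_mult[symmetric] m_assoc)
      then show "z \<in> orbit N a y" using n m orbitI[of "n \<otimes> inv m" y] by simp
    qed
  qed
qed

lemma orbit_eq_iff:
  assumes "x \<in> X" "y \<in> X"
  shows "orbit N a y = orbit N a x \<longleftrightarrow> y \<in> orbit N a x"
  using orbit_eq_if_mem orbit_self assms by blast

text \<open>Normality of \<open>N\<close> is what makes \<open>(Ng)(Nx) = N(gx)\<close> an orbit again.\<close>

lemma qact_rcoset_orbit:
  assumes g: "g \<in> carrier G" and x: "x \<in> X"
  shows "qact a (N #> g) (orbit N a x) = orbit N a (a g x)"
proof
  show "qact a (N #> g) (orbit N a x) \<subseteq> orbit N a (a g x)"
  proof
    fix z assume "z \<in> qact a (N #> g) (orbit N a x)"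
    then obtain n m where nm: "n \<in> N" "m \<in> N" "z = a (n \<otimes> g) (a m x)"
      unfolding qact_def orbit_def r_coset_def by blast
    have conj: "g \<otimes> m \<otimes> inv g \<in> N" using inv_op_closed2 g nm by blast
    have "z = a (n \<otimes> (g \<otimes> m \<otimes> inv g)) (a g x)"
      using nm g x mem_carrier by (simp add: act_mult[symmetric] m_assoc)
    then show "z \<in> orbit N a (a g x)" using conj nm orbitI by simp
  qed
  show "orbit N a (a g x) \<subseteq> qact a (N #> g) (orbit N a x)"
  proof
    fix z assume "z \<in> orbit N a (a g x)"
    then obtain n where n: "n \<in> N" "z = a n (a g x)" unfolding orbit_def by blast
    have "z = a (n \<otimes> g) x" using n g x mem_carrier by (simp add: act_mult)
    moreover have "n \<otimes> g \<in> N #> g" using n unfolding r_coset_def by blast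
    ultimately show "z \<in> qact a (N #> g) (orbit N a x)"
      unfolding qact_def using orbit_self[OF x] by blast
  qed
qed

lemma qact_one: "x \<in> X \<Longrightarrow> qact a N (orbit N a x) = orbit N a x"
  using qact_rcoset_orbit[of \<one> x] act_one coset_mult_one[OF subset] by simp

lemma qact_set_mult:
  assumes "C \<subseteq> carrier G" "D \<subseteq> carrier G" "Y \<subseteq> X"
  shows "qact a (C <#> D) Y = qact a C (qact a D Y)"
proof
  show "qact a (C <#> D) Y \<subseteq> qact a C (qact a D Y)"
  proof
    fix z assume "z \<in> qact a (C <#> D) Y"
    then obtain c d y where cdy: "c \<in> C" "d \<in> D" "y \<in> Y" "z = a (c \<otimes> d) y"
      unfolding qact_def set_mult_def by blast
    moreover have "c \<in> carrier G" "d \<in> carrier G" "y \<in> X" using cdy assms by auto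
    ultimately have "z = a c (a d y)" by (simp add: act_mult)
    moreover have "a d y \<in> qact a D Y" using cdy unfolding qact_def by blast
    ultimately show "z \<in> qact a C (qact a D Y)" using cdy(1) unfolding qact_def by blast
  qed
  show "qact a C (qact a D Y) \<subseteq> qact a (C <#> D) Y"
  proof
    fix z assume "z \<in> qact a C (qact a D Y)"
    then obtain c d y where cdy: "c \<in> C" "d \<in> D" "y \<in> Y" "z = a c (a d y)"
      unfolding qact_def by blast
    moreover have "c \<in> carrier G" "d \<in> carrier G" "y \<in> X" using cdy assms by auto
    ultimately have "z = a (c \<otimes> d) y" by (simp add: act_mult)
    moreover have "c \<otimes> d \<in> C <#> D" using cdy unfolding set_mult_def by blast
    ultimately show "z \<in> qact a (C <#> D) Y" using cdy(3) unfolding qact_def by blast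
  qed
qed

lemma bij_betw_qact_rcoset:
  assumes g: "g \<in> carrier G"
  shows "bij_betw (qact a (N #> g)) (orbit N a ` X) (orbit N a ` X)"
proof (rule bij_betw_byWitness[where f'="qact a (N #> inv g)"])
  have gi: "inv g \<in> carrier G" using g by simp
  show "\<forall>Y\<in>orbit N a ` X. qact a (N #> inv g) (qact a (N #> g) Y) = Y"
    using qact_rcoset_orbit[OF g] qact_rcoset_orbit[OF gi] act_closed[OF g] act_inv_act[OF g] by auto
  show "\<forall>Y\<in>orbit N a ` X. qact a (N #> g) (qact a (N #> inv g) Y) = Y"
    using qact_rcoset_orbit[OF g] qact_rcoset_orbit[OF gi] act_closed[OF gi] act_act_inv[OF g] by auto
  show "qact a (N #> g) ` orbit N a ` X \<subseteq> orbit N a ` X"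
    using qact_rcoset_orbit[OF g] act_closed[OF g] by auto
  show "qact a (N #> inv g) ` orbit N a ` X \<subseteq> orbit N a ` X"
    using qact_rcoset_orbit[OF gi] act_closed[OF gi] by auto
qed

end

section \<open>The quotient graph\<close>

locale normal_graph_action =
  fixes G :: "('g,'m) monoid_scheme" (structure) and N :: "'g set"
    and V :: "'v set" and E :: "'e set" and og :: "'e \<Rightarrow> 'v" and rv :: "'e \<Rightarrow> 'e"
    and aV :: "'g \<Rightarrow> 'v \<Rightarrow> 'v" and aE :: "'g \<Rightarrow> 'e \<Rightarrow> 'e"
  assumes normal: "normal N G"
    and connected: "connected_graph V E og rv" and finite_degree: "finite_degree V E og"
    and automorphisms: "acts_by_automorphisms G V E og rv aV aE"
    and transitive: "vertex_transitive G V aV"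
begin

lemma group: "group G" using normal by (simp add: normal_def)

lemma graph: "graph V E og rv" using connected by (simp add: connected_graph_def)

lemma og_in_V: "e \<in> E \<Longrightarrow> og e \<in> V"
  and rv_in_E: "e \<in> E \<Longrightarrow> rv e \<in> E"
  using graph unfolding graph_def by blast+

lemma aV_in_V: "g \<in> carrier G \<Longrightarrow> v \<in> V \<Longrightarrow> aV g v \<in> V"
  and aE_in_E: "g \<in> carrier G \<Longrightarrow> e \<in> E \<Longrightarrow> aE g e \<in> E"
  using automorphisms unfolding acts_by_automorphisms_def bij_betw_def by blast+

lemma og_aE: "g \<in> carrier G \<Longrightarrow> e \<in> E \<Longrightarrow> og (aE g e) = aV g (og e)"
  and rv_aE: "g \<in> carrier G \<Longrightarrow> e \<in> E \<Longrightarrow> rv (aE g e) = aE g (rv e)"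
  using automorphisms unfolding acts_by_automorphisms_def by blast+

sublocale NV: normal_subgroup_action N G V aV
  by (rule normal_subgroup_action.intro[OF normal], unfold_locales)
    (use automorphisms aV_in_V in \<open>auto simp: acts_by_automorphisms_def\<close>)

sublocale NE: normal_subgroup_action N G E aE
  by (rule normal_subgroup_action.intro[OF normal], unfold_locales)
    (use automorphisms aE_in_E in \<open>auto simp: acts_by_automorphisms_def\<close>)

lemma qo_orbit:
  assumes e: "e \<in> E"
  shows "qo N aV og (orbit N aE e) = orbit N aV (og e)"
proof
  show "qo N aV og (orbit N aE e) \<subseteq> orbit N aV (og e)"
  proof
    fix z assume "z \<in> qo N aV og (orbit N aE e)"
    then obtain n m where nm: "n \<in> N" "m \<in> N" "z = aV n (og (aE m e))"
      unfolding qo_def orbit_def by blast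
    then have "z = aV (n \<otimes> m) (og e)" using e og_aE og_in_V NV.act_mult by simp
    then show "z \<in> orbit N aV (og e)" using NV.orbitI nm by simp
  qed
  show "orbit N aV (og e) \<subseteq> qo N aV og (orbit N aE e)"
    using NE.orbit_self[OF e] unfolding qo_def orbit_def by blast
qed

lemma qrv_orbit:
  assumes e: "e \<in> E"
  shows "qrv rv (orbit N aE e) = orbit N aE (rv e)"
proof -
  have "\<And>n. n \<in> N \<Longrightarrow> rv (aE n e) = aE n (rv e)" using rv_aE e by simp
  then show ?thesis unfolding qrv_def orbit_def by (auto simp: image_iff) (metis)
qed

lemma graph_quotient: "graph (qV N V aV) (qE N E aE) (qo N aV og) (qrv rv)"
  using graph unfolding graph_def qE_def qV_def by (auto simp: qo_orbit qrv_orbit)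

lemma adjacency_quotientI:
  "e \<in> E \<Longrightarrow> (orbit N aV (og e), orbit N aV (og (rv e))) \<in> adjacency (qE N E aE) (qo N aV og) (qrv rv)"
  unfolding adjacency_def qE_def
  by (rule CollectI, rule exI[of _ "orbit N aE e"]) (simp add: qo_orbit qrv_orbit rv_in_E)

lemma rtrancl_adjacency_quotientI:
  assumes "(u, v) \<in> (adjacency E og rv)\<^sup>*"
  shows "(orbit N aV u, orbit N aV v) \<in> (adjacency (qE N E aE) (qo N aV og) (qrv rv))\<^sup>*"
  using assms
proof (induction rule: rtrancl_induct)
  case base
  then show ?case by simp
next
  case (step y z)
  then obtain e where "e \<in> E" "y = og e" "z = og (rv e)" unfolding adjacency_def by blast
  with adjacency_quotientI step.IH show ?case by (meson rtrancl.rtrancl_into_rtrancl)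
qed

lemma connected_graph_quotient: "connected_graph (qV N V aV) (qE N E aE) (qo N aV og) (qrv rv)"
  using connected graph_quotient rtrancl_adjacency_quotientI
  unfolding connected_graph_def by (auto simp: qV_def)

lemma rcoset_of_carrier_FactGroup:
  "C \<in> carrier (G Mod N) \<Longrightarrow> \<exists>g\<in>carrier G. C = N #> g"
  unfolding carrier_FactGroup by blast

lemma og_qact:
  assumes C: "C \<in> carrier (G Mod N)" and X: "X \<in> qE N E aE"
  shows "qo N aV og (qact aE C X) = qact aV C (qo N aV og X)"
proof -
  obtain g where g: "g \<in> carrier G" "C = N #> g" using rcoset_of_carrier_FactGroup[OF C] by blast
  obtain e where e: "e \<in> E" "X = orbit N aE e" using X unfolding qE_def by blast
  show ?thesis
    using g e NE.qact_rcoset_orbit[OF g(1) e(1)] NV.qact_rcoset_orbit[OF g(1) og_in_V[OF e(1)]]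
      qo_orbit[OF e(1)] qo_orbit[OF aE_in_E[OF g(1) e(1)]] og_aE[OF g(1) e(1)] by simp
qed

lemma rv_qact:
  assumes C: "C \<in> carrier (G Mod N)" and X: "X \<in> qE N E aE"
  shows "qrv rv (qact aE C X) = qact aE C (qrv rv X)"
proof -
  obtain g where g: "g \<in> carrier G" "C = N #> g" using rcoset_of_carrier_FactGroup[OF C] by blast
  obtain e where e: "e \<in> E" "X = orbit N aE e" using X unfolding qE_def by blast
  show ?thesis
    using g e NE.qact_rcoset_orbit[OF g(1) e(1)] NE.qact_rcoset_orbit[OF g(1) rv_in_E[OF e(1)]]
      qrv_orbit[OF e(1)] qrv_orbit[OF aE_in_E[OF g(1) e(1)]] rv_aE[OF g(1) e(1)] by simp
qed

lemma qact_mult: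
  assumes "C \<in> carrier (G Mod N)" "D \<in> carrier (G Mod N)"
  shows "X \<in> qV N V aV \<Longrightarrow> qact aV (C \<otimes>\<^bsub>G Mod N\<^esub> D) X = qact aV C (qact aV D X)"
    and "Y \<in> qE N E aE \<Longrightarrow> qact aE (C \<otimes>\<^bsub>G Mod N\<^esub> D) Y = qact aE C (qact aE D Y)"
proof -
  have "C \<subseteq> carrier G" "D \<subseteq> carrier G"
    using assms NV.r_coset_subset_G NV.subset unfolding carrier_FactGroup by auto
  then show "X \<in> qV N V aV \<Longrightarrow> qact aV (C \<otimes>\<^bsub>G Mod N\<^esub> D) X = qact aV C (qact aV D X)"
    and "Y \<in> qE N E aE \<Longrightarrow> qact aE (C \<otimes>\<^bsub>G Mod N\<^esub> D) Y = qact aE C (qact aE D Y)"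
    using NV.qact_set_mult NE.qact_set_mult NV.orbit_subset NE.orbit_subset
    unfolding qV_def qE_def by auto
qed

lemma acts_by_automorphisms_quotient:
  "acts_by_automorphisms (G Mod N) (qV N V aV) (qE N E aE) (qo N aV og) (qrv rv) (qact aV) (qact aE)"
  unfolding acts_by_automorphisms_def
proof (intro conjI ballI)
  fix C assume "C \<in> carrier (G Mod N)"
  then show "bij_betw (qact aV C) (qV N V aV) (qV N V aV)"
    and "bij_betw (qact aE C) (qE N E aE) (qE N E aE)"
    using rcoset_of_carrier_FactGroup NV.bij_betw_qact_rcoset NE.bij_betw_qact_rcoset
    unfolding qV_def qE_def by metis+
qed (use og_qact rv_qact qact_mult NV.qact_one NE.qact_one in \<open>auto simp: qV_def qE_def\<close>)

lemma vertex_transitive_quotient: "vertex_transitive (G Mod N) (qV N V aV) (qact aV)"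
  unfolding vertex_transitive_def
proof (intro ballI)
  fix X Y assume "X \<in> qV N V aV" "Y \<in> qV N V aV"
  then obtain u v where uv: "u \<in> V" "v \<in> V" "X = orbit N aV u" "Y = orbit N aV v"
    unfolding qV_def by blast
  obtain g where g: "g \<in> carrier G" "aV g u = v"
    using transitive uv(1,2) unfolding vertex_transitive_def by blast
  have "N #> g \<in> carrier (G Mod N)" using g unfolding carrier_FactGroup by blast
  moreover have "qact aV (N #> g) X = Y" using NV.qact_rcoset_orbit[OF g(1) uv(1)] uv g by simp
  ultimately show "\<exists>C\<in>carrier (G Mod N). qact aV C X = Y" by blast
qed

end

section \<open>The degree of the quotient graph\<close>

context normal_graph_action
begin

lemma out_edges_quotient:
  assumes v: "v \<in> V"
  shows "out_edges (qE N E aE) (qo N aV og) (orbit N aV v) = orbit N aE ` out_edges E og v"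
proof
  show "out_edges (qE N E aE) (qo N aV og) (orbit N aV v) \<subseteq> orbit N aE ` out_edges E og v"
  proof
    fix X assume "X \<in> out_edges (qE N E aE) (qo N aV og) (orbit N aV v)"
    then obtain e where e: "e \<in> E" "X = orbit N aE e" "orbit N aV (og e) = orbit N aV v"
      by (auto simp: out_edges_def qE_def qo_orbit)
    have "og e \<in> orbit N aV v" using e(3) NV.orbit_self[OF og_in_V[OF e(1)]] by simp
    then obtain n where n: "n \<in> N" "og e = aV n v" unfolding orbit_def by blast
    have n': "n \<in> carrier G" "inv n \<in> N" using n(1) NV.mem_carrier NV.m_inv_closed by auto
    define e' where "e' = aE (inv n) e"
    have "e' \<in> E" "og e' = v"
      using e(1) n v n' og_aE NV.act_inv_act aE_in_E unfolding e'_def by auto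
    moreover have "orbit N aE e' = X"
      using NE.orbit_eq_if_mem[OF e(1) NE.orbitI[OF n'(2)]] e(2) unfolding e'_def by simp
    ultimately show "X \<in> orbit N aE ` out_edges E og v" unfolding out_edges_def by blast
  qed
  show "orbit N aE ` out_edges E og v \<subseteq> out_edges (qE N E aE) (qo N aV og) (orbit N aV v)"
    by (auto simp: out_edges_def qE_def qo_orbit)
qed

lemma vdeg_quotient:
  "v \<in> V \<Longrightarrow> vdeg (qE N E aE) (qo N aV og) (orbit N aV v) = enat (card (orbit N aE ` out_edges E og v))"
  using finite_out_edges[OF finite_degree] by (simp add: vdeg_out_edges out_edges_quotient)

lemma vdeg_quotient_le:
  assumes v: "v \<in> V"
  shows "vdeg (qE N E aE) (qo N aV og) (orbit N aV v) \<le> vdeg E og v"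
  using finite_out_edges[OF finite_degree v]
  unfolding vdeg_quotient[OF v] vdeg_out_edges[of E] by (simp add: card_image_le)

definition stabilizer_fixes_out_edges :: "'v \<Rightarrow> bool" where
  "stabilizer_fixes_out_edges v \<longleftrightarrow> (\<forall>n\<in>N. aV n v = v \<longrightarrow> (\<forall>e\<in>out_edges E og v. aE n e = e))"

lemma inj_on_orbit_out_edges_iff:
  assumes v: "v \<in> V"
  shows "inj_on (orbit N aE) (out_edges E og v) \<longleftrightarrow> stabilizer_fixes_out_edges v"
proof
  assume inj: "inj_on (orbit N aE) (out_edges E og v)"
  show "stabilizer_fixes_out_edges v" unfolding stabilizer_fixes_out_edges_def
  proof (intro ballI impI)
    fix n e assume n: "n \<in> N" "aV n v = v" and e: "e \<in> out_edges E og v"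
    have "n \<in> carrier G" using n(1) NV.mem_carrier by blast
    then have "aE n e \<in> out_edges E og v" using n e by (simp add: out_edges_def aE_in_E og_aE)
    moreover have "orbit N aE (aE n e) = orbit N aE e"
      using NE.orbit_eq_if_mem[OF _ NE.orbitI[OF n(1)]] e unfolding out_edges_def by blast
    ultimately show "aE n e = e" using inj e unfolding inj_on_def by blast
  qed
next
  assume fix_all: "stabilizer_fixes_out_edges v"
  show "inj_on (orbit N aE) (out_edges E og v)"
  proof (rule inj_onI)
    fix e1 e2 assume e1: "e1 \<in> out_edges E og v" and e2: "e2 \<in> out_edges E og v"
      and eq: "orbit N aE e1 = orbit N aE e2"
    then have "e1 \<in> orbit N aE e2" using NE.orbit_self unfolding out_edges_def by blast
    then obtain n where n: "n \<in> N" "e1 = aE n e2" unfolding orbit_def by blast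
    moreover have "n \<in> carrier G" using n(1) NV.mem_carrier by blast
    ultimately have "aV n v = v" using e1 e2 og_aE unfolding out_edges_def by auto
    then show "e1 = e2" using fix_all n e2 unfolding stabilizer_fixes_out_edges_def by blast
  qed
qed

lemma vdeg_quotient_eq_iff:
  assumes v: "v \<in> V"
  shows "vdeg (qE N E aE) (qo N aV og) (orbit N aV v) = vdeg E og v \<longleftrightarrow> stabilizer_fixes_out_edges v"
proof -
  have finite: "finite (out_edges E og v)" using finite_out_edges[OF finite_degree v] .
  then have "vdeg (qE N E aE) (qo N aV og) (orbit N aV v) = vdeg E og v
      \<longleftrightarrow> card (orbit N aE ` out_edges E og v) = card (out_edges E og v)"
    unfolding vdeg_quotient[OF v] vdeg_out_edges[of E] by simp
  also have "\<dots> \<longleftrightarrow> inj_on (orbit N aE) (out_edges E og v)"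
    using finite card_image eq_card_imp_inj_on by metis
  finally show ?thesis using inj_on_orbit_out_edges_iff[OF v] by simp
qed

text \<open>Connectedness propagates the local condition: an element of \<open>N\<close> fixing a vertex and all
  edges issuing from it also fixes the neighbours.\<close>

lemma acts_freely_mod_kernel_iff:
  "acts_freely_mod_kernel N V E aV aE \<longleftrightarrow> (\<forall>v\<in>V. stabilizer_fixes_out_edges v)"
proof
  assume "acts_freely_mod_kernel N V E aV aE"
  then show "\<forall>v\<in>V. stabilizer_fixes_out_edges v"
    unfolding acts_freely_mod_kernel_def stabilizer_fixes_out_edges_def out_edges_def by blast
next
  assume fix_all: "\<forall>v\<in>V. stabilizer_fixes_out_edges v"
  show "acts_freely_mod_kernel N V E aV aE" unfolding acts_freely_mod_kernel_def
  proof (intro ballI impI)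
    fix v n assume v: "v \<in> V" and n: "n \<in> N" "aV n v = v"
    have nc: "n \<in> carrier G" using n(1) NV.mem_carrier by blast
    have fixes_edge: "aE n e = e" if "e \<in> E" "aV n (og e) = og e" for e
      using fix_all that n(1) og_in_V unfolding stabilizer_fixes_out_edges_def out_edges_def by blast
    have fixes_reachable: "aV n w = w" if "(v, w) \<in> (adjacency E og rv)\<^sup>*" for w
      using that
    proof (induction rule: rtrancl_induct)
      case base
      then show ?case using n by simp
    next
      case (step y z)
      then obtain e where e: "e \<in> E" "y = og e" "z = og (rv e)" unfolding adjacency_def by blast
      then have "aE n e = e" using fixes_edge step.IH by simp
      then show ?case using e nc og_aE[of n "rv e"] rv_aE[of n e] rv_in_E by simp
    qed
    have on_V: "aV n w = w" if "w \<in> V" for w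
      using fixes_reachable connected v that unfolding connected_graph_def by blast
    show "(\<forall>w\<in>V. aV n w = w) \<and> (\<forall>e\<in>E. aE n e = e)"
      using on_V fixes_edge og_in_V by blast
  qed
qed

lemma gdeg_quotient_eq_vdeg:
  "v \<in> V \<Longrightarrow> gdeg (qV N V aV) (qE N E aE) (qo N aV og) = vdeg (qE N E aE) (qo N aV og) (orbit N aV v)"
  by (rule gdeg_eq_vdeg_if_vertex_transitive[OF graph_quotient acts_by_automorphisms_quotient
        vertex_transitive_quotient]) (simp add: qV_def)

lemma gdeg_eq_vdeg: "v \<in> V \<Longrightarrow> gdeg V E og = vdeg E og v"
  by (rule gdeg_eq_vdeg_if_vertex_transitive[OF graph automorphisms transitive])

lemma gdeg_quotient_le: "gdeg (qV N V aV) (qE N E aE) (qo N aV og) \<le> gdeg V E og"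
proof -
  obtain v where "v \<in> V" using connected unfolding connected_graph_def by blast
  then show ?thesis using gdeg_quotient_eq_vdeg gdeg_eq_vdeg vdeg_quotient_le by simp
qed

text \<open>Both degrees are attained at every vertex, so the global degrees agree iff the degrees
  agree at every vertex.\<close>

lemma gdeg_quotient_eq_iff:
  "gdeg (qV N V aV) (qE N E aE) (qo N aV og) = gdeg V E og \<longleftrightarrow> acts_freely_mod_kernel N V E aV aE"
proof -
  obtain v0 where v0: "v0 \<in> V" using connected unfolding connected_graph_def by blast
  have "gdeg (qV N V aV) (qE N E aE) (qo N aV og) = gdeg V E og
      \<longleftrightarrow> (\<forall>v\<in>V. vdeg (qE N E aE) (qo N aV og) (orbit N aV v) = vdeg E og v)"
    using v0 by (auto simp flip: gdeg_quotient_eq_vdeg gdeg_eq_vdeg)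
  also have "\<dots> \<longleftrightarrow> (\<forall>v\<in>V. stabilizer_fixes_out_edges v)" using vdeg_quotient_eq_iff by blast
  finally show ?thesis using acts_freely_mod_kernel_iff by simp
qed

end

section \<open>The quotient graph is a Cayley-Abels graph\<close>

locale topological_normal_graph_action =
  normal_graph_action G N V E og rv aV aE
  for G :: "('g,'m) monoid_scheme" (structure) and N V E og rv aV aE +
  fixes T :: "'g topology"
  assumes topological_group: "topological_group G T"
begin

lemma topspace_eq_carrier: "topspace T = carrier G"
  using topological_group by (simp add: topological_group_def)

lemma topspace_quot_top_eq_carrier: "topspace (quot_top G T N) = carrier (G Mod N)"
  using topspace_quot_top[OF group NV.subgroup_axioms topspace_eq_carrier] by (simp add: FactGroup_def)

lemma continuous_map_rcoset: "continuous_map T (quot_top G T N) (\<lambda>g. N #> g)"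
  using continuous_map_quot_top_proj[OF group NV.subgroup_axioms topspace_eq_carrier] .

lemma continuous_map_quotient_left_mult:
  assumes C: "C \<in> carrier (G Mod N)"
  shows "continuous_map (quot_top G T N) (quot_top G T N) (\<lambda>X. C \<otimes>\<^bsub>G Mod N\<^esub> X)"
proof -
  obtain c where c: "c \<in> carrier G" "C = N #> c" using rcoset_of_carrier_FactGroup[OF C] by blast
  have "continuous_map T (quot_top G T N) (\<lambda>g. N #> (c \<otimes> g))"
    using continuous_map_compose[OF continuous_map_left_mult[OF topological_group c(1)]
        continuous_map_rcoset] by (simp only: o_def)
  then show ?thesis
    by (rule continuous_map_quot_top_factor[OF group NV.subgroup_axioms topspace_eq_carrier])
      (simp add: c NV.rcos_sum)
qed

lemma continuous_map_quotient_inv: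
  "continuous_map (quot_top G T N) (quot_top G T N) (\<lambda>X. inv\<^bsub>G Mod N\<^esub> X)"
proof -
  have "continuous_map T T (\<lambda>g. inv g)" using topological_group by (simp add: topological_group_def)
  then have "continuous_map T (quot_top G T N) (\<lambda>g. N #> inv g)"
    using continuous_map_compose[OF _ continuous_map_rcoset] by (simp only: o_def)
  then show ?thesis
    by (rule continuous_map_quot_top_factor[OF group NV.subgroup_axioms topspace_eq_carrier])
      (simp add: NV.inv_FactGroup NV.rcos_inv carrier_FactGroup)
qed

lemma subgroup_identity_component: "subgroup (identity_component G T) G"
  unfolding identity_component_def
  using subgroup_connected_component_of_one[OF group topspace_eq_carrier
      continuous_map_left_mult[OF topological_group]] topological_group
  by (simp add: topological_group_def)

lemma subgroup_identity_component_quotient: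
  "subgroup (identity_component (G Mod N) (quot_top G T N)) (G Mod N)"
  unfolding identity_component_def
  using subgroup_connected_component_of_one[OF NV.factorgroup_is_group topspace_quot_top_eq_carrier
      continuous_map_quotient_left_mult continuous_map_quotient_inv] .

lemma rcoset_mem_stabilizer_quotient_iff:
  assumes v: "v \<in> V" and g: "g \<in> carrier G"
  shows "N #> g \<in> stabilizer (G Mod N) (qact aV) (orbit N aV v) \<longleftrightarrow> aV g v \<in> orbit N aV v"
proof -
  have "N #> g \<in> carrier (G Mod N)" using g unfolding carrier_FactGroup by blast
  then have "N #> g \<in> stabilizer (G Mod N) (qact aV) (orbit N aV v)
      \<longleftrightarrow> orbit N aV (aV g v) = orbit N aV v"
    unfolding stabilizer_def using NV.qact_rcoset_orbit[OF g v] by simp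
  also have "\<dots> \<longleftrightarrow> aV g v \<in> orbit N aV v" using NV.orbit_eq_iff[OF v aV_in_V[OF g v]] .
  finally show ?thesis .
qed

lemma stabilizer_quotient_eq_image:
  assumes v: "v \<in> V"
  shows "stabilizer (G Mod N) (qact aV) (orbit N aV v) = (\<lambda>g. N #> g) ` stabilizer G aV v"
proof
  show "(\<lambda>g. N #> g) ` stabilizer G aV v \<subseteq> stabilizer (G Mod N) (qact aV) (orbit N aV v)"
    using rcoset_mem_stabilizer_quotient_iff[OF v] NV.orbit_self[OF v]
    unfolding stabilizer_def[of G] by auto
  show "stabilizer (G Mod N) (qact aV) (orbit N aV v) \<subseteq> (\<lambda>g. N #> g) ` stabilizer G aV v"
  proof
    fix C assume C: "C \<in> stabilizer (G Mod N) (qact aV) (orbit N aV v)"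
    then obtain g where g: "g \<in> carrier G" "C = N #> g"
      using rcoset_of_carrier_FactGroup unfolding stabilizer_def by blast
    then have "aV g v \<in> orbit N aV v" using rcoset_mem_stabilizer_quotient_iff[OF v] C by simp
    then obtain n where n: "n \<in> N" "aV g v = aV n v" unfolding orbit_def by blast
    have nc: "n \<in> carrier G" "inv n \<in> N" using n NV.mem_carrier NV.m_inv_closed by auto
    define s where "s = inv n \<otimes> g"
    have "s \<in> carrier G" "aV s v = v"
      unfolding s_def using nc g v n NV.act_mult NV.act_inv_act by simp_all
    then have "s \<in> stabilizer G aV v" unfolding stabilizer_def by blast
    moreover have "s \<in> N #> g" unfolding s_def r_coset_def using nc by blast
    then have "N #> s = N #> g" using NV.repr_independence g(1) NV.subgroup_axioms by metis
    ultimately show "C \<in> (\<lambda>g. N #> g) ` stabilizer G aV v" using g by blast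
  qed
qed

lemma Union_stabilizer_quotient:
  assumes v: "v \<in> V"
  shows "\<Union>(stabilizer (G Mod N) (qact aV) (orbit N aV v)) = {x \<in> carrier G. aV x v \<in> orbit N aV v}"
    and "\<Union>(rcosets N - stabilizer (G Mod N) (qact aV) (orbit N aV v))
      = {x \<in> carrier G. aV x v \<notin> orbit N aV v}"
proof -
  let ?U = "stabilizer (G Mod N) (qact aV) (orbit N aV v)"
  have "?U = {C \<in> rcosets N. C \<in> ?U}" unfolding stabilizer_def by (auto simp: FactGroup_def)
  then have "\<Union>?U = {x \<in> carrier G. N #> x \<in> ?U}"
    using Union_rcosets_Collect[OF group NV.subgroup_axioms, of "\<lambda>C. C \<in> ?U"] by simp
  then show "\<Union>?U = {x \<in> carrier G. aV x v \<in> orbit N aV v}"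
    using rcoset_mem_stabilizer_quotient_iff[OF v] by auto
  have "rcosets N - ?U = {C \<in> rcosets N. C \<notin> ?U}" by blast
  then have "\<Union>(rcosets N - ?U) = {x \<in> carrier G. N #> x \<notin> ?U}"
    using Union_rcosets_Collect[OF group NV.subgroup_axioms, of "\<lambda>C. C \<notin> ?U"] by simp
  then show "\<Union>(rcosets N - ?U) = {x \<in> carrier G. aV x v \<notin> orbit N aV v}"
    using rcoset_mem_stabilizer_quotient_iff[OF v] by auto
qed

text \<open>The stabilizer of the orbit and its complement pull back to unions of left cosets of
  the open subgroup \<open>G\<^sub>v\<close>.\<close>

lemma clopen_stabilizer_quotient:
  assumes v: "v \<in> V" and open_stabilizer: "openin T (stabilizer G aV v)"
  shows "openin (quot_top G T N) (stabilizer (G Mod N) (qact aV) (orbit N aV v))"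
    and "closedin (quot_top G T N) (stabilizer (G Mod N) (qact aV) (orbit N aV v))"
proof -
  let ?U = "stabilizer (G Mod N) (qact aV) (orbit N aV v)"
  have one: "\<one> \<in> stabilizer G aV v" using v NV.act_one unfolding stabilizer_def by simp
  have stable: "x \<otimes> u \<in> carrier G" "aV (x \<otimes> u) v = aV x v"
    if "x \<in> carrier G" "u \<in> stabilizer G aV v" for x u
    using that v NV.act_mult unfolding stabilizer_def by auto
  have "openin T {x \<in> carrier G. aV x v \<in> orbit N aV v}"
    and "openin T {x \<in> carrier G. aV x v \<notin> orbit N aV v}"
    by (rule openin_if_right_mult_stable[OF topological_group open_stabilizer one]; use stable in auto)+
  then have "openin T (\<Union>?U)" and "openin T (\<Union>(rcosets N - ?U))"
    using Union_stabilizer_quotient[OF v] by simp_all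
  moreover have "?U \<subseteq> rcosets N" unfolding stabilizer_def by (simp add: FactGroup_def)
  moreover have "topspace (quot_top G T N) = rcosets N"
    using topspace_quot_top_eq_carrier by (simp add: FactGroup_def)
  ultimately show "openin (quot_top G T N) ?U" and "closedin (quot_top G T N) ?U"
    unfolding closedin_def openin_quot_top[OF group NV.subgroup_axioms] by auto
qed

lemma identity_component_subset_stabilizer_quotient:
  assumes v: "v \<in> V" and open_stabilizer: "openin T (stabilizer G aV v)"
  shows "identity_component (G Mod N) (quot_top G T N) \<subseteq> stabilizer (G Mod N) (qact aV) (orbit N aV v)"
proof -
  let ?K = "identity_component (G Mod N) (quot_top G T N)"
  let ?U = "stabilizer (G Mod N) (qact aV) (orbit N aV v)"
  have "\<one>\<^bsub>G Mod N\<^esub> = N" unfolding FactGroup_def by simp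
  then have "N \<in> ?K" using subgroup.one_closed[OF subgroup_identity_component_quotient] by simp
  moreover have "N #> \<one> \<in> ?U"
    using rcoset_mem_stabilizer_quotient_iff[OF v NV.one_closed] NV.act_one[OF v] NV.orbit_self[OF v]
    by simp
  then have "N \<in> ?U" using NV.coset_mult_one[OF NV.subset] by simp
  moreover have "connectedin (quot_top G T N) ?K"
    unfolding identity_component_def by (rule connectedin_connected_component_of)
  then have "?K \<subseteq> ?U \<or> disjnt ?K ?U"
    using connectedin_clopen_cases clopen_stabilizer_quotient(2,1)[OF v open_stabilizer] by blast
  ultimately show ?thesis unfolding disjnt_def by blast
qed


lemma rcoset_identity_component_mem:
  assumes z: "z \<in> identity_component G T"
  shows "N #> z \<in> identity_component (G Mod N) (quot_top G T N)"
proof -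
  let ?G0 = "identity_component G T"
  have "connectedin (quot_top G T N) ((\<lambda>g. N #> g) ` ?G0)"
    unfolding identity_component_def
    by (rule connectedin_continuous_map_image[OF continuous_map_rcoset connectedin_connected_component_of])
  moreover have "N \<in> (\<lambda>g. N #> g) ` ?G0"
    using subgroup.one_closed[OF subgroup_identity_component] NV.coset_mult_one[OF NV.subset]
    by (metis image_eqI)
  ultimately have "(\<lambda>g. N #> g) ` ?G0 \<subseteq> connected_component_of_set (quot_top G T N) N"
    by (rule connected_component_of_maximal)
  then have "N #> z \<in> connected_component_of_set (quot_top G T N) N" using z by blast
  moreover have "\<one>\<^bsub>G Mod N\<^esub> = N" unfolding FactGroup_def by simp
  ultimately show ?thesis unfolding identity_component_def by argo
qed

lemma rcoset_identity_component_quotient_eq: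
  assumes g: "g \<in> carrier G" and x: "x \<in> identity_component G T #> g"
  shows "identity_component (G Mod N) (quot_top G T N) #>\<^bsub>G Mod N\<^esub> (N #> x)
    = identity_component (G Mod N) (quot_top G T N) #>\<^bsub>G Mod N\<^esub> (N #> g)"
proof -
  let ?K = "identity_component (G Mod N) (quot_top G T N)"
  obtain z where z: "z \<in> identity_component G T" "x = z \<otimes> g" using x unfolding r_coset_def by blast
  have zc: "z \<in> carrier G" using z subgroup.subset[OF subgroup_identity_component] by blast
  have cosets: "N #> z \<in> carrier (G Mod N)" "N #> g \<in> carrier (G Mod N)"
    using zc g unfolding carrier_FactGroup by blast+
  have "N #> x = (N #> z) \<otimes>\<^bsub>G Mod N\<^esub> (N #> g)" using NV.rcos_sum[OF zc g] z by simp
  then have "?K #>\<^bsub>G Mod N\<^esub> (N #> x) = (?K #>\<^bsub>G Mod N\<^esub> (N #> z)) #>\<^bsub>G Mod N\<^esub> (N #> g)"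
    using group.coset_mult_assoc[OF NV.factorgroup_is_group
        subgroup.subset[OF subgroup_identity_component_quotient] cosets] by simp
  also have "?K #>\<^bsub>G Mod N\<^esub> (N #> z) = ?K"
    using group.coset_join2[OF NV.factorgroup_is_group cosets(1) subgroup_identity_component_quotient
        rcoset_identity_component_mem[OF z(1)]] .
  finally show ?thesis .
qed

text \<open>The map \<open>G/G\<degree> \<rightarrow> (G/N)/(G/N)\<degree>\<close> induced by the projection is continuous and maps
  \<open>G\<^sub>v G\<degree>/G\<degree>\<close> onto the image of the stabilizer of \<open>Nv\<close>.\<close>

lemma compactin_stabilizer_quotient:
  assumes v: "v \<in> V"
    and compact: "compactin (quot_top G T (identity_component G T))
      ((\<lambda>g. identity_component G T #> g) ` stabilizer G aV v)"
  shows "compactin (quot_top (G Mod N) (quot_top G T N) (identity_component (G Mod N) (quot_top G T N)))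
      ((\<lambda>C. identity_component (G Mod N) (quot_top G T N) #>\<^bsub>G Mod N\<^esub> C)
        ` stabilizer (G Mod N) (qact aV) (orbit N aV v))"
proof -
  let ?K = "identity_component (G Mod N) (quot_top G T N)"
  let ?G0 = "identity_component G T"
  let ?h = "\<lambda>g. ?K #>\<^bsub>G Mod N\<^esub> (N #> g)"
  define f where "f C = ?h (SOME x. x \<in> C)" for C
  have "continuous_map (quot_top G T N) (quot_top (G Mod N) (quot_top G T N) ?K)
      (\<lambda>C. ?K #>\<^bsub>G Mod N\<^esub> C)"
    using continuous_map_quot_top_proj[OF NV.factorgroup_is_group
        subgroup_identity_component_quotient topspace_quot_top_eq_carrier] .
  then have "continuous_map T (quot_top (G Mod N) (quot_top G T N) ?K) ?h"
    using continuous_map_compose[OF continuous_map_rcoset] by (simp only: o_def)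
  moreover have f: "f (?G0 #> g) = ?h g" if g: "g \<in> carrier G" for g
  proof -
    have "g \<in> ?G0 #> g" using NV.rcos_self[OF g subgroup_identity_component] .
    then have "(SOME x. x \<in> ?G0 #> g) \<in> ?G0 #> g" by (rule someI)
    then show ?thesis unfolding f_def by (rule rcoset_identity_component_quotient_eq[OF g])
  qed
  ultimately have "continuous_map (quot_top G T ?G0) (quot_top (G Mod N) (quot_top G T N) ?K) f"
    by (rule continuous_map_quot_top_factor[OF group subgroup_identity_component topspace_eq_carrier])
  then have "compactin (quot_top (G Mod N) (quot_top G T N) ?K) (f ` (\<lambda>g. ?G0 #> g) ` stabilizer G aV v)"
    using image_compactin[OF compact] by blast
  moreover have "f ` (\<lambda>g. ?G0 #> g) ` stabilizer G aV v = ?h ` stabilizer G aV v"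
    using f unfolding stabilizer_def by (auto simp: image_image)
  ultimately show ?thesis using stabilizer_quotient_eq_image[OF v] by (simp add: image_image)
qed

lemma cayley_abels_graph_quotient:
  assumes "cayley_abels_graph G T V E og rv aV aE"
  shows "cayley_abels_graph (G Mod N) (quot_top G T N) (qV N V aV) (qE N E aE)
           (qo N aV og) (qrv rv) (qact aV) (qact aE)"
  unfolding cayley_abels_graph_def
proof (intro conjI ballI)
  show "finite_degree (qV N V aV) (qE N E aE) (qo N aV og)"
    using gdeg_quotient_le finite_degree unfolding finite_degree_def by (rule order_le_less_trans)
  fix X assume "X \<in> qV N V aV"
  then obtain v where v: "v \<in> V" "X = orbit N aV v" unfolding qV_def by blast
  have "openin T (stabilizer G aV v)" and "connected_by_compact G T (stabilizer G aV v)"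
    using assms v unfolding cayley_abels_graph_def by blast+
  then show "openin (quot_top G T N) (stabilizer (G Mod N) (qact aV) X)"
    and "connected_by_compact (G Mod N) (quot_top G T N) (stabilizer (G Mod N) (qact aV) X)"
    using v clopen_stabilizer_quotient(1) identity_component_subset_stabilizer_quotient
      compactin_stabilizer_quotient unfolding connected_by_compact_def Let_def by simp_all
qed (simp_all add: connected_graph_quotient acts_by_automorphisms_quotient vertex_transitive_quotient)

end

theorem mainTheorem4:
  fixes G :: "('g,'m) monoid_scheme" and T :: "'g topology" and N :: "'g set"
    and V :: "'v set" and E :: "'e set" and og :: "'e \<Rightarrow> 'v" and rv :: "'e \<Rightarrow> 'e"
    and aV :: "'g \<Rightarrow> 'v \<Rightarrow> 'v" and aE :: "'g \<Rightarrow> 'e \<Rightarrow> 'e"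
  assumes "locally_compact_group G T"
    and "compactly_generated G T"
    and "normal N G" and "closedin T N"
    and "connected_graph V E og rv" and "finite_degree V E og"
    and "acts_by_automorphisms G V E og rv aV aE" and "vertex_transitive G V aV"
  shows "(cayley_abels_graph G T V E og rv aV aE \<longrightarrow>
           cayley_abels_graph (G Mod N) (quot_top G T N) (qV N V aV) (qE N E aE)
              (qo N aV og) (qrv rv) (qact aV) (qact aE))
       \<and> gdeg (qV N V aV) (qE N E aE) (qo N aV og) \<le> gdeg V E og
       \<and> (gdeg (qV N V aV) (qE N E aE) (qo N aV og) = gdeg V E og
            \<longleftrightarrow> acts_freely_mod_kernel N V E aV aE)"
proof -
  have "topological_group G T" using assms(1) unfolding locally_compact_group_def by simp
  then interpret topological_normal_graph_action G N V E og rv aV aE T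
    using assms(3,5-8)
    by (simp add: topological_normal_graph_action_def topological_normal_graph_action_axioms_def
        normal_graph_action_def)
  show ?thesis
    by (simp add: cayley_abels_graph_quotient gdeg_quotient_le gdeg_quotient_eq_iff)
qed

end
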